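(* Let $G_0$ be a group generated by two elements $x,y$ such that (1) $x^4=y^4=1$; (2) $[x,y]^2=[[x,y],x]^2=[[x,y],y]^2=1$; (3) $[[x,y],x]$ and $[[x,y],y]$ each commute with $x$ and with $y$. Then (a) $yx=xy[x,y]$, (b) $[x,y]x=x[x,y][[x,y],x]$, (c) $[x,y]y=y[x,y][[x,y],y]$, and $|G_0|\le128$. If in addition $y^2=1$, then $[[x,y],y]=1$ and $|G_0|\le 32$.
   Context: Commutators are $[\sigma,\tau]=\sigma^{-1}\tau^{-1}\sigma\tau$. *)

theory Defs
  imports "HOL-Algebra.Algebra"
begin

text \<open>Commutator convention of the paper: [s,t] = s^-1 t^-1 s t.\<close>
definition comm :: "('a, 'b) monoid_scheme \<Rightarrow> 'a \<Rightarrow> 'a \<Rightarrow> 'a" where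
  "comm G s t = inv\<^bsub>G\<^esub> s \<otimes>\<^bsub>G\<^esub> inv\<^bsub>G\<^esub> t \<otimes>\<^bsub>G\<^esub> s \<otimes>\<^bsub>G\<^esub> t"

end

theory Submission
  imports Defs
begin

(*
  Put c = [x,y], a = [c,x] and b = [c,y].  Since a and b commute with the generators they are
  central, and the relations y x = x y c, c x = x c a, c y = y c b (the first uses c = c^-1) let
  one move y past x^i and c^k past y^j at the cost of central factors.  Hence the normal forms
  x^i y^j c^k a^l b^m contain 1 and are closed under left multiplication by x and by y, whose
  inverses are positive powers of themselves; so they exhaust the group, and reducing the
  exponents modulo the orders 4, 4, 2, 2, 2 leaves at most 128 elements.  If moreover y^2 = 1,
  then c y = x^-1 y x is an involution, so b = c^-1 y^-1 c y = (c y)^2 = 1 and the same count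
  gives 4 * 2 * 2 * 2 = 32.
*)

lemma (in group) mult_inv_cancel [simp]:
  "x \<in> carrier G \<Longrightarrow> y \<in> carrier G \<Longrightarrow> x \<otimes> (inv x \<otimes> y) = y"
  by (simp add: m_assoc[symmetric])

lemma (in group) inv_mult_cancel [simp]:
  "x \<in> carrier G \<Longrightarrow> y \<in> carrier G \<Longrightarrow> inv x \<otimes> (x \<otimes> y) = y"
  by (simp add: m_assoc[symmetric])

lemma (in group) comm_closed [simp]:
  "s \<in> carrier G \<Longrightarrow> t \<in> carrier G \<Longrightarrow> comm G s t \<in> carrier G"
  by (simp add: comm_def)

lemma (in group) mult_swap_comm:
  assumes "s \<in> carrier G" "t \<in> carrier G"
  shows "s \<otimes> t = t \<otimes> s \<otimes> comm G s t"
  using assms by (simp add: comm_def m_assoc)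

lemma (in group) comm_comm_eq_one_if_involutions:
  assumes xG: "x \<in> carrier G" and yG: "y \<in> carrier G"
    and yy: "y \<otimes> y = \<one>" and cc: "comm G x y \<otimes> comm G x y = \<one>"
  shows "comm G (comm G x y) y = \<one>"
proof -
  let ?c = "comm G x y"
  have cG: "?c \<in> carrier G" using xG yG by simp
  have inv_y: "inv y = y" using inv_equality[OF yy yG yG] .
  have inv_c: "inv ?c = ?c" using inv_equality[OF cc cG cG] .
  have cy: "?c \<otimes> y = inv x \<otimes> y \<otimes> x"
    using xG yG yy by (simp add: comm_def inv_y m_assoc)
  have "comm G ?c y = (?c \<otimes> y) \<otimes> (?c \<otimes> y)"
    unfolding comm_def[of G ?c y] using cG yG by (simp add: inv_y inv_c m_assoc)
  also have "\<dots> = inv x \<otimes> (y \<otimes> y) \<otimes> x"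
    unfolding cy using xG yG by (simp add: m_assoc)
  also have "\<dots> = \<one>"
    using xG yy by simp
  finally show ?thesis .
qed

lemma (in monoid) nat_pow_mod:
  assumes "g \<in> carrier G" "g [^] (n::nat) = \<one>"
  shows "g [^] (i::nat) = g [^] (i mod n)"
proof -
  have "g [^] i = (g [^] n) [^] (i div n) \<otimes> g [^] (i mod n)"
    using assms(1) by (simp add: nat_pow_mult nat_pow_pow)
  then show ?thesis using assms by simp
qed

lemma (in group) commutes_with_generate:
  assumes zG: "z \<in> carrier G" and AG: "A \<subseteq> carrier G"
    and zA: "\<And>g. g \<in> A \<Longrightarrow> z \<otimes> g = g \<otimes> z"
    and h: "h \<in> generate G A"
  shows "z \<otimes> h = h \<otimes> z"
  using h
proof (induction h rule: generate.induct)
  case one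
  then show ?case using zG by simp
next
  case (incl g)
  then show ?case using zA by simp
next
  case (inv g)
  then have gG: "g \<in> carrier G" using AG by auto
  have "z \<otimes> inv g = inv g \<otimes> (g \<otimes> z) \<otimes> inv g"
    using zG gG by (simp add: m_assoc[symmetric])
  also have "\<dots> = inv g \<otimes> z"
    using zG gG by (simp add: m_assoc[symmetric] flip: zA[OF inv(1)]) (simp add: m_assoc)
  finally show ?case .
next
  case (eng h1 h2)
  then have "h1 \<in> carrier G" "h2 \<in> carrier G"
    using generate_in_carrier[OF AG] by auto
  then show ?case using eng.IH zG by (metis m_assoc)
qed

lemma (in group) generate_subset_if_left_mult_closed:
  assumes AG: "A \<subseteq> carrier G" and SG: "S \<subseteq> carrier G" and one: "\<one> \<in> S"
    and closed: "\<And>g s. g \<in> A \<Longrightarrow> s \<in> S \<Longrightarrow> g \<otimes> s \<in> S"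
    and torsion: "\<And>g. g \<in> A \<Longrightarrow> \<exists>n>0. g [^] (n::nat) = \<one>"
  shows "generate G A \<subseteq> S"
proof -
  have pow_closed: "g [^] (k::nat) \<otimes> s \<in> S" if "g \<in> A" "s \<in> S" for g k s
    using that(2)
  proof (induction k arbitrary: s)
    case 0
    then show ?case using SG by auto
  next
    case (Suc k)
    then have "g [^] k \<otimes> (g \<otimes> s) \<in> S" using closed that(1) by blast
    moreover have "g \<in> carrier G" "s \<in> carrier G" using that(1) Suc.prems AG SG by auto
    ultimately show ?case by (simp add: m_assoc)
  qed
  have inv_closed: "inv g \<otimes> s \<in> S" if g: "g \<in> A" and s: "s \<in> S" for g s
  proof -
    obtain n :: nat where "0 < n" "g [^] n = \<one>" using torsion[OF g] by blast
    then have "g [^] (n - 1) \<otimes> g = \<one>" using g AG by (simp flip: nat_pow_Suc)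
    then have "inv g = g [^] (n - 1)" using g AG inv_equality by auto
    then show ?thesis using pow_closed g s by simp
  qed
  have "\<forall>s\<in>S. h \<otimes> s \<in> S" if "h \<in> generate G A" for h
    using that
  proof (induction h rule: generate.induct)
    case (eng h1 h2)
    then have "h1 \<in> carrier G" "h2 \<in> carrier G"
      using generate_in_carrier[OF AG] by auto
    then show ?case using eng.IH SG by (auto simp: m_assoc)
  qed (use SG closed inv_closed in auto)
  then show ?thesis using one generate_in_carrier[OF AG] by force
qed

lemma (in group) nat_pow_mult_nat_pow_swap:
  assumes uG: "u \<in> carrier G" and gG: "g \<in> carrier G" and zG: "z \<in> carrier G"
    and ug: "u \<otimes> g = g \<otimes> u \<otimes> z"
    and zu: "z \<otimes> u = u \<otimes> z" and zg: "z \<otimes> g = g \<otimes> z"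
  shows "u [^] (k::nat) \<otimes> g [^] (j::nat) = g [^] j \<otimes> u [^] k \<otimes> z [^] (k * j)"
proof -
  have zku: "z [^] k \<otimes> u = u \<otimes> z [^] k" for k :: nat
    using group_commutes_pow[OF zu zG uG] .
  have zkg: "z [^] k \<otimes> g = g \<otimes> z [^] k" for k :: nat
    using group_commutes_pow[OF zg zG gG] .
  have ukg: "u [^] k \<otimes> g = g \<otimes> u [^] k \<otimes> z [^] k" for k :: nat
  proof (induction k)
    case (Suc k)
    have "u [^] Suc k \<otimes> g = u [^] k \<otimes> (u \<otimes> g)"
      using uG gG by (simp add: m_assoc)
    also have "\<dots> = (u [^] k \<otimes> g) \<otimes> u \<otimes> z"
      using ug uG gG zG by (simp add: m_assoc)
    also have "\<dots> = g \<otimes> u [^] k \<otimes> (z [^] k \<otimes> u) \<otimes> z"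
      using Suc uG gG zG by (simp add: m_assoc)
    also have "\<dots> = g \<otimes> u [^] Suc k \<otimes> z [^] Suc k"
      using uG gG zG zku by (simp add: m_assoc)
    finally show ?case .
  qed (use uG gG in simp)
  show ?thesis
  proof (induction j)
    case (Suc j)
    have "u [^] k \<otimes> g [^] Suc j = (u [^] k \<otimes> g [^] j) \<otimes> g"
      using uG gG by (simp add: m_assoc)
    also have "\<dots> = g [^] j \<otimes> (u [^] k \<otimes> g) \<otimes> z [^] (k * j)"
      using Suc uG gG zG zkg by (simp add: m_assoc)
    also have "\<dots> = g [^] Suc j \<otimes> u [^] k \<otimes> z [^] (k * Suc j)"
      using ukg uG gG zG by (simp add: m_assoc nat_pow_mult add.commute)
    finally show ?case .
  qed (use uG gG in simp)
qed

locale two_generated_class3 = group G for G (structure) +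
  fixes x y :: 'a
  assumes x_closed [simp]: "x \<in> carrier G" and y_closed [simp]: "y \<in> carrier G"
    and generated: "generate G {x, y} = carrier G"
    and comm_involution: "comm G x y \<otimes> comm G x y = \<one>"
    and comm_comm_x_commutes: "comm G (comm G x y) x \<otimes> x = x \<otimes> comm G (comm G x y) x"
      "comm G (comm G x y) x \<otimes> y = y \<otimes> comm G (comm G x y) x"
    and comm_comm_y_commutes: "comm G (comm G x y) y \<otimes> x = x \<otimes> comm G (comm G x y) y"
      "comm G (comm G x y) y \<otimes> y = y \<otimes> comm G (comm G x y) y"
begin

abbreviation "c \<equiv> comm G x y"
abbreviation "a \<equiv> comm G c x"
abbreviation "b \<equiv> comm G c y"

lemma central_if_commutes_with_generators:
  assumes "z \<in> carrier G" "z \<otimes> x = x \<otimes> z" "z \<otimes> y = y \<otimes> z" "h \<in> carrier G"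
  shows "z \<otimes> h = h \<otimes> z"
  using commutes_with_generate[of z "{x, y}" h] assms generated by auto

lemma a_central: "h \<in> carrier G \<Longrightarrow> a \<otimes> h = h \<otimes> a"
  by (rule central_if_commutes_with_generators) (simp_all add: comm_comm_x_commutes)

lemma b_central: "h \<in> carrier G \<Longrightarrow> b \<otimes> h = h \<otimes> b"
  by (rule central_if_commutes_with_generators) (simp_all add: comm_comm_y_commutes)

lemma a_pow_central: "h \<in> carrier G \<Longrightarrow> a [^] (n::nat) \<otimes> h = h \<otimes> a [^] n"
  by (rule group_commutes_pow[OF a_central]) simp_all

lemma b_pow_central: "h \<in> carrier G \<Longrightarrow> b [^] (n::nat) \<otimes> h = h \<otimes> b [^] n"
  by (rule group_commutes_pow[OF b_central]) simp_all

lemma y_mult_x: "y \<otimes> x = x \<otimes> y \<otimes> c"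
proof -
  have "x \<otimes> y \<otimes> c = y \<otimes> x \<otimes> (c \<otimes> c)"
    using mult_swap_comm[of x y] by (simp add: m_assoc)
  then show ?thesis using comm_involution by simp
qed

lemma c_pow_mult_x_pow: "c [^] (k::nat) \<otimes> x [^] (j::nat) = x [^] j \<otimes> c [^] k \<otimes> a [^] (k * j)"
  by (rule nat_pow_mult_nat_pow_swap[OF _ _ _ mult_swap_comm])
    (simp_all add: a_central)

lemma c_pow_mult_y_pow: "c [^] (k::nat) \<otimes> y [^] (j::nat) = y [^] j \<otimes> c [^] k \<otimes> b [^] (k * j)"
  by (rule nat_pow_mult_nat_pow_swap[OF _ _ _ mult_swap_comm])
    (simp_all add: b_central)

text \<open>The exponent of a is i(i-1)/2; only its existence is needed.\<close>

lemma y_mult_x_pow: "\<exists>l::nat. y \<otimes> x [^] (i::nat) = x [^] i \<otimes> y \<otimes> c [^] i \<otimes> a [^] l"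
proof (induction i)
  case 0
  show ?case by (rule exI[of _ 0]) simp
next
  case (Suc i)
  then obtain l :: nat where l: "y \<otimes> x [^] i = x [^] i \<otimes> y \<otimes> c [^] i \<otimes> a [^] l" ..
  have "y \<otimes> x [^] Suc i = (y \<otimes> x [^] i) \<otimes> x"
    by (simp add: m_assoc)
  also have "\<dots> = x [^] i \<otimes> y \<otimes> c [^] i \<otimes> (a [^] l \<otimes> x)"
    by (simp add: l m_assoc)
  also have "a [^] l \<otimes> x = x \<otimes> a [^] l"
    by (rule a_pow_central) simp
  also have "x [^] i \<otimes> y \<otimes> c [^] i \<otimes> (x \<otimes> a [^] l) = x [^] i \<otimes> y \<otimes> (c [^] i \<otimes> x) \<otimes> a [^] l"
    by (simp add: m_assoc)
  also have "\<dots> = x [^] i \<otimes> (y \<otimes> x) \<otimes> c [^] i \<otimes> (a [^] i \<otimes> a [^] l)"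
    using c_pow_mult_x_pow[of i 1] by (simp add: m_assoc)
  also have "\<dots> = (x [^] i \<otimes> x) \<otimes> y \<otimes> (c \<otimes> c [^] i) \<otimes> (a [^] i \<otimes> a [^] l)"
    by (simp add: y_mult_x m_assoc)
  also have "\<dots> = x [^] Suc i \<otimes> y \<otimes> c [^] Suc i \<otimes> a [^] (i + l)"
    by (simp add: nat_pow_mult flip: nat_pow_Suc2)
  finally show ?case ..
qed

definition normal_form :: "nat \<Rightarrow> nat \<Rightarrow> nat \<Rightarrow> nat \<Rightarrow> nat \<Rightarrow> 'a" where
  "normal_form i j k l m = x [^] i \<otimes> y [^] j \<otimes> c [^] k \<otimes> a [^] l \<otimes> b [^] m"

lemma normal_form_closed [simp]: "normal_form i j k l m \<in> carrier G"
  by (simp add: normal_form_def)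

lemma x_mult_normal_form: "x \<otimes> normal_form i j k l m = normal_form (Suc i) j k l m"
  using nat_pow_Suc2[of x i] by (simp add: normal_form_def m_assoc)

lemma y_mult_normal_form:
  "\<exists>l'. y \<otimes> normal_form i j k l m = normal_form i (Suc j) (i + k) l' (i * j + m)"
proof -
  obtain n :: nat where n: "y \<otimes> x [^] i = x [^] i \<otimes> y \<otimes> c [^] i \<otimes> a [^] n"
    using y_mult_x_pow ..
  have "y \<otimes> normal_form i j k l m = (y \<otimes> x [^] i) \<otimes> y [^] j \<otimes> c [^] k \<otimes> a [^] l \<otimes> b [^] m"
    by (simp add: normal_form_def m_assoc)
  also have "\<dots> = x [^] i \<otimes> y \<otimes> c [^] i \<otimes> (a [^] n \<otimes> (y [^] j \<otimes> c [^] k)) \<otimes> a [^] l \<otimes> b [^] m"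
    by (simp add: n m_assoc)
  also have "a [^] n \<otimes> (y [^] j \<otimes> c [^] k) = y [^] j \<otimes> c [^] k \<otimes> a [^] n"
    by (rule a_pow_central) simp
  also have "x [^] i \<otimes> y \<otimes> c [^] i \<otimes> (y [^] j \<otimes> c [^] k \<otimes> a [^] n) \<otimes> a [^] l \<otimes> b [^] m
      = x [^] i \<otimes> y \<otimes> (c [^] i \<otimes> y [^] j) \<otimes> (c [^] k \<otimes> (a [^] n \<otimes> a [^] l)) \<otimes> b [^] m"
    by (simp add: m_assoc)
  also have "c [^] i \<otimes> y [^] j = y [^] j \<otimes> c [^] i \<otimes> b [^] (i * j)"
    by (rule c_pow_mult_y_pow)
  also have "x [^] i \<otimes> y \<otimes> (y [^] j \<otimes> c [^] i \<otimes> b [^] (i * j)) \<otimes> (c [^] k \<otimes> (a [^] n \<otimes> a [^] l)) \<otimes> b [^] m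
      = x [^] i \<otimes> (y \<otimes> y [^] j) \<otimes> c [^] i \<otimes> (b [^] (i * j) \<otimes> (c [^] k \<otimes> (a [^] n \<otimes> a [^] l))) \<otimes> b [^] m"
    by (simp add: m_assoc)
  also have "b [^] (i * j) \<otimes> (c [^] k \<otimes> (a [^] n \<otimes> a [^] l)) = c [^] k \<otimes> (a [^] n \<otimes> a [^] l) \<otimes> b [^] (i * j)"
    by (rule b_pow_central) simp
  also have "x [^] i \<otimes> (y \<otimes> y [^] j) \<otimes> c [^] i \<otimes> (c [^] k \<otimes> (a [^] n \<otimes> a [^] l) \<otimes> b [^] (i * j)) \<otimes> b [^] m
      = x [^] i \<otimes> (y \<otimes> y [^] j) \<otimes> (c [^] i \<otimes> c [^] k) \<otimes> (a [^] n \<otimes> a [^] l) \<otimes> (b [^] (i * j) \<otimes> b [^] m)"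
    by (simp add: m_assoc)
  also have "\<dots> = normal_form i (Suc j) (i + k) (n + l) (i * j + m)"
    by (simp add: normal_form_def nat_pow_mult flip: nat_pow_Suc2)
  finally show ?thesis ..
qed

lemma carrier_eq_normal_forms:
  fixes p q :: nat
  assumes "x [^] p = \<one>" "0 < p" "y [^] q = \<one>" "0 < q"
  shows "carrier G = {normal_form i j k l m | i j k l m. True}"
proof
  let ?S = "{normal_form i j k l m | i j k l m. True}"
  have "normal_form 0 0 0 0 0 = \<one>"
    by (simp add: normal_form_def)
  then have "\<one> \<in> ?S" by (metis (mono_tags, lifting) mem_Collect_eq)
  moreover have "g \<otimes> s \<in> ?S" if g: "g \<in> {x, y}" and s: "s \<in> ?S" for g s
  proof -
    obtain i j k l m where s: "s = normal_form i j k l m" using s by blast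
    obtain l' where "y \<otimes> s = normal_form i (Suc j) (i + k) l' (i * j + m)"
      using y_mult_normal_form s by blast
    moreover have "x \<otimes> s = normal_form (Suc i) j k l m"
      using x_mult_normal_form s by simp
    ultimately show ?thesis using g by blast
  qed
  moreover have "\<exists>n>0. g [^] (n::nat) = \<one>" if "g \<in> {x, y}" for g
    using that assms by blast
  ultimately have "generate G {x, y} \<subseteq> ?S"
    by (intro generate_subset_if_left_mult_closed) auto
  then show "carrier G \<subseteq> ?S" using generated by simp
qed auto

lemma c_pow_two: "c [^] (2::nat) = \<one>"
  using comm_involution by (simp add: numeral_2_eq_2)

lemma normal_form_mod:
  fixes p q r s :: nat
  assumes "x [^] p = \<one>" "y [^] q = \<one>" "a [^] r = \<one>" "b [^] s = \<one>"
  shows "normal_form i j k l m = normal_form (i mod p) (j mod q) (k mod 2) (l mod r) (m mod s)"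
  using nat_pow_mod[of x p i] nat_pow_mod[of y q j] nat_pow_mod[OF _ c_pow_two, of k]
    nat_pow_mod[of a r l] nat_pow_mod[of b s m] assms
  by (simp add: normal_form_def)

lemma card_carrier_le:
  fixes p q r s :: nat
  assumes "x [^] p = \<one>" "y [^] q = \<one>" "a [^] r = \<one>" "b [^] s = \<one>"
    and "0 < p" "0 < q" "0 < r" "0 < s"
  shows "finite (carrier G) \<and> card (carrier G) \<le> p * q * 2 * r * s"
proof -
  let ?B = "{..<p} \<times> {..<q} \<times> {..<2::nat} \<times> {..<r} \<times> {..<s}"
  let ?nf = "\<lambda>(i, j, k, l, m). normal_form i j k l m"
  have sub: "carrier G \<subseteq> ?nf ` ?B"
  proof
    fix g assume "g \<in> carrier G"
    then obtain i j k l m where "g = normal_form i j k l m"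
      using carrier_eq_normal_forms[of p q] assms by blast
    then have g: "g = ?nf (i mod p, j mod q, k mod 2, l mod r, m mod s)"
      using normal_form_mod[OF assms(1-4), of i j k l m] by simp
    have "(i mod p, j mod q, k mod 2, l mod r, m mod s) \<in> ?B"
      using assms by simp
    then show "g \<in> ?nf ` ?B" unfolding g by (rule imageI)
  qed
  have fin: "finite (?nf ` ?B)" by simp
  have "card (?nf ` ?B) \<le> p * q * 2 * r * s"
    using card_image_le[of ?B ?nf] by (simp add: card_cartesian_product)
  then show ?thesis
    using finite_subset[OF sub fin] card_mono[OF fin sub] by simp
qed

end

theorem proposition2p7:
  fixes G (structure) and x y :: 'a
  assumes grp: "group G"
    and xG: "x \<in> carrier G" and yG: "y \<in> carrier G"
    and gen: "generate G {x, y} = carrier G"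
    and x4: "x [^] (4::nat) = \<one>" and y4: "y [^] (4::nat) = \<one>"
    and c2: "comm G x y [^] (2::nat) = \<one>"
    and cx2: "comm G (comm G x y) x [^] (2::nat) = \<one>"
    and cy2: "comm G (comm G x y) y [^] (2::nat) = \<one>"
    and cx_x: "comm G (comm G x y) x \<otimes> x = x \<otimes> comm G (comm G x y) x"
    and cx_y: "comm G (comm G x y) x \<otimes> y = y \<otimes> comm G (comm G x y) x"
    and cy_x: "comm G (comm G x y) y \<otimes> x = x \<otimes> comm G (comm G x y) y"
    and cy_y: "comm G (comm G x y) y \<otimes> y = y \<otimes> comm G (comm G x y) y"
  shows "y \<otimes> x = x \<otimes> y \<otimes> comm G x y
       \<and> comm G x y \<otimes> x = x \<otimes> comm G x y \<otimes> comm G (comm G x y) x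
       \<and> comm G x y \<otimes> y = y \<otimes> comm G x y \<otimes> comm G (comm G x y) y
       \<and> finite (carrier G) \<and> card (carrier G) \<le> 128
       \<and> (y [^] (2::nat) = \<one> \<longrightarrow>
            comm G (comm G x y) y = \<one> \<and> card (carrier G) \<le> 32)"
proof -
  interpret group G by (rule grp)
  have "comm G x y \<otimes> comm G x y = \<one>"
    using c2 xG yG by (simp add: numeral_2_eq_2)
  then interpret two_generated_class3 G x y
    by (intro two_generated_class3.intro two_generated_class3_axioms.intro grp)
      (simp_all add: xG yG gen cx_x cx_y cy_x cy_y)
  have "finite (carrier G) \<and> card (carrier G) \<le> 128"
    using card_carrier_le[of 4 4 2 2] x4 y4 cx2 cy2 by simp
  moreover have "b = \<one> \<and> card (carrier G) \<le> 32" if y2: "y [^] (2::nat) = \<one>"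
  proof -
    have "b = \<one>"
      using comm_comm_eq_one_if_involutions comm_involution y2 by (simp add: numeral_2_eq_2)
    then show ?thesis
      using card_carrier_le[of 4 2 2 1] x4 y2 cx2 by simp
  qed
  ultimately show ?thesis
    using y_mult_x mult_swap_comm[of c x] mult_swap_comm[of c y] by simp
qed

end
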